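(* Let $V$ be a Hermitian positive definite $m\times m$ matrix such that $\hat L^\dagger(\mathbf{k})V\hat L(\mathbf{k})$ is nonsingular for every nonzero $\mathbf{k}\in\mathbb{R}^d$, set $\Gamma(\mathbf{k})=\hat L(\mathbf{k})\big(\hat L^\dagger(\mathbf{k})V\hat L(\mathbf{k})\big)^{-1}\hat L^\dagger(\mathbf{k})$ and $\Delta(\mathbf{k})=V-V\Gamma(\mathbf{k})V$. Let $\mathbf{w}\in\mathbb{C}^m$ and suppose $\beta=\sup_{\mathbf{k}\in\mathbb{R}^d,\mathbf{k}\neq0}\mathbf{w}\cdot\Delta(\mathbf{k})\mathbf{w}$ is finite and positive. Let $T=V^{-1}-\mathbf{w}\mathbf{w}^\dagger/\beta$ and $g(\mathbf{J})=\mathbf{J}\cdot T\mathbf{J}$. Let $\mathbf{k}\neq0$ satisfy $\mathbf{w}\cdot\Delta(\mathbf{k})\mathbf{w}=\beta$. Then the set of $\mathbf{H}\in\mathcal{J}_{\mathbf{k}}$ with $g(\mathbf{H})=0$ consists exactly of the vectors $\mathbf{H}=b\Delta(\mathbf{k})\mathbf{w}$ with $b\in\mathbb{C}$, and for such $\mathbf{H}$ one has $T\mathbf{H}=-b\Gamma(\mathbf{k})V\mathbf{w}=\hat L(\mathbf{k})\mathbf{G}$ with $\mathbf{G}=-b\big(\hat L^\dagger(\mathbf{k})V\hat L(\mathbf{k})\big)^{-1}\hat L^\dagger(\mathbf{k})V\mathbf{w}$.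
   Context: Fix integers $d,\ell,m,t\ge 1$ and complex constants $A_{rq}$, $A^{a_1\ldots a_h}_{rqh}$ ($1\le r\le m$, $1\le q\le \ell$, $1\le h\le t$, $1\le a_i\le d$). For $\mathbf{k}\in\mathbb{R}^d$, $\hat L(\mathbf{k})$ is the $m\times\ell$ matrix with entries $A_{rq}+\sum_{h=1}^t\sum_{a_1,\ldots,a_h=1}^d i^hA^{a_1\ldots a_h}_{rqh}k_{a_1}\cdots k_{a_h}$, $\hat L^\dagger(\mathbf{k})$ is its conjugate transpose, and $\mathcal{J}_{\mathbf{k}}\subset\mathbb{C}^m$ is the null space of $\hat L^\dagger(\mathbf{k})$; $\mathbf{w}^\dagger$ is the conjugate transpose of $\mathbf{w}$. For $\mathbf{a},\mathbf{b}\in\mathbb{C}^m$, $\mathbf{a}\cdot\mathbf{b}=\sum_r\overline{a_r}b_r$. *)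

theory Defs
  imports "Jordan_Normal_Form.Schur_Decomposition" "Jordan_Normal_Form.Matrix_Kernel"
    "Jordan_Normal_Form.Gauss_Jordan_Elimination"
begin

text \<open>Indices are 0-based: rows r < m, columns q < l, directions a < d, orders h in 1..t.
  A0 r q stands for A_{rq}; Ah r q h as stands for A^{a_1...a_h}_{rqh} with as = [a_1,...,a_h].\<close>

definition Lhat :: "(nat \<Rightarrow> nat \<Rightarrow> complex) \<Rightarrow> (nat \<Rightarrow> nat \<Rightarrow> nat \<Rightarrow> nat list \<Rightarrow> complex)
    \<Rightarrow> nat \<Rightarrow> nat \<Rightarrow> nat \<Rightarrow> nat \<Rightarrow> real vec \<Rightarrow> complex mat" where
  "Lhat A0 Ah d t m l k = mat m l (\<lambda>(r, q). A0 r q +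
     (\<Sum>h\<in>{1..t}. \<Sum>as\<in>{as. set as \<subseteq> {..<d} \<and> length as = h}.
        \<i> ^ h * Ah r q h as * (\<Prod>a\<leftarrow>as. complex_of_real (k $ a))))"

definition cdot :: "complex vec \<Rightarrow> complex vec \<Rightarrow> complex" where
  "cdot a b = (\<Sum>r<dim_vec a. cnj (a $ r) * b $ r)"

definition minv :: "complex mat \<Rightarrow> complex mat" where
  "minv A = the (mat_inverse A)"

definition herm_pos_def :: "nat \<Rightarrow> complex mat \<Rightarrow> bool" where
  "herm_pos_def m V \<longleftrightarrow> V \<in> carrier_mat m m \<and> mat_adjoint V = V \<and>
     (\<forall>x\<in>carrier_vec m. x \<noteq> 0\<^sub>v m \<longrightarrow> Re (cdot x (V *\<^sub>v x)) > 0)"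

definition outer :: "complex vec \<Rightarrow> complex mat" where
  "outer w = mat (dim_vec w) (dim_vec w) (\<lambda>(i, j). w $ i * cnj (w $ j))"

end

theory Submission
  imports Defs "Jordan_Normal_Form.Determinant"
begin

text \<open>Put P = V^-1, again Hermitian positive definite, and u = \<Delta>(k) w. Since
  P u = w - \<Gamma>(k) V w and \<Gamma>(k) V w lies in the range of L(k), the vector u lies in the null
  space J of the adjoint of L(k), and u \<cdot> P H = w \<cdot> H for every H \<in> J; in particular
  u \<cdot> P u = \<beta>. Hence on J one has g(H) = H \<cdot> P H - |u \<cdot> P H|^2 / (u \<cdot> P u), which vanishes
  exactly in the equality case of the Cauchy--Schwarz inequality for the inner product
  (x, y) \<mapsto> x \<cdot> P y, i.e. when H is a multiple of u.\<close>

lemma dim_row_mat_adjoint [simp]: "dim_row (mat_adjoint A) = dim_col A"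
  and dim_col_mat_adjoint [simp]: "dim_col (mat_adjoint A) = dim_row A"
  by (simp_all add: mat_adjoint_def)

lemma index_mat_adjoint [simp]:
  "i < dim_col A \<Longrightarrow> j < dim_row A \<Longrightarrow> mat_adjoint A $$ (i, j) = cnj (A $$ (j, i))"
  unfolding mat_adjoint_def by (simp add: mat_of_rows_def)

lemma adjoint_carrier_mat: "A \<in> carrier_mat n p \<Longrightarrow> mat_adjoint A \<in> carrier_mat p n"
  by auto

lemma adjoint_adjoint: "mat_adjoint (mat_adjoint A) = (A :: complex mat)"
  by (rule eq_matI) auto

lemma adjoint_one: "mat_adjoint (1\<^sub>m n :: complex mat) = 1\<^sub>m n"
  by (rule eq_matI) auto

lemma adjoint_mult:
  fixes A B :: "complex mat"
  assumes "dim_col A = dim_row B"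
  shows "mat_adjoint (A * B) = mat_adjoint B * mat_adjoint A"
  using assms by (intro eq_matI) (auto simp: scalar_prod_def mult.commute intro!: sum.cong)

lemma cdot_mult_mat_vec:
  assumes A: "A \<in> carrier_mat n p" and x: "x \<in> carrier_vec n" and y: "y \<in> carrier_vec p"
  shows "cdot x (A *\<^sub>v y) = cdot (mat_adjoint A *\<^sub>v x) y"
proof -
  have "cdot x (A *\<^sub>v y) = (\<Sum>r<n. \<Sum>j<p. cnj (x $ r) * A $$ (r, j) * y $ j)"
    using A x y unfolding cdot_def
    by (auto simp: scalar_prod_def sum_distrib_left mult.assoc atLeast0LessThan intro!: sum.cong)
  also have "\<dots> = (\<Sum>j<p. \<Sum>r<n. cnj (x $ r) * A $$ (r, j) * y $ j)"
    by (rule sum.swap)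
  also have "\<dots> = cdot (mat_adjoint A *\<^sub>v x) y"
    using A x y unfolding cdot_def
    by (auto simp: scalar_prod_def sum_distrib_left mult_ac atLeast0LessThan intro!: sum.cong)
  finally show ?thesis .
qed

lemma cnj_cdot: "dim_vec x = dim_vec y \<Longrightarrow> cnj (cdot x y) = cdot y x"
  unfolding cdot_def by (simp add: mult.commute)

lemma cdot_zero_right: "cdot x (0\<^sub>v (dim_vec x)) = 0"
  unfolding cdot_def by simp

lemma cdot_minus_right:
  "dim_vec y = dim_vec x \<Longrightarrow> dim_vec z = dim_vec x \<Longrightarrow> cdot x (y - z) = cdot x y - cdot x z"
  unfolding cdot_def by (simp add: algebra_simps sum_subtractf)

lemma cdot_minus_left: "dim_vec y = dim_vec x \<Longrightarrow> cdot (x - y) z = cdot x z - cdot y z"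
  unfolding cdot_def by (simp add: algebra_simps sum_subtractf)

lemma cdot_smult_right: "dim_vec y = dim_vec x \<Longrightarrow> cdot x (a \<cdot>\<^sub>v y) = a * cdot x y"
  unfolding cdot_def by (simp add: algebra_simps sum_distrib_left)

lemma cdot_smult_left: "cdot (a \<cdot>\<^sub>v x) y = cnj a * cdot x y"
  unfolding cdot_def by (simp add: algebra_simps sum_distrib_left)

lemma smult_outer_mult_mat_vec:
  "dim_vec H = dim_vec w \<Longrightarrow> (c \<cdot>\<^sub>m outer w) *\<^sub>v H = (c * cdot w H) \<cdot>\<^sub>v w"
  unfolding outer_def cdot_def
  by (intro eq_vecI) (auto simp: scalar_prod_def sum_distrib_left mult_ac intro!: sum.cong)

lemma minv_mat:
  assumes A: "A \<in> carrier_mat n n" and inv: "invertible_mat A"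
  shows "minv A \<in> carrier_mat n n" "A * minv A = 1\<^sub>m n" "minv A * A = 1\<^sub>m n"
proof -
  obtain B where B: "A * B = 1\<^sub>m n" "B * A = 1\<^sub>m (dim_row B)"
    using inv A unfolding invertible_mat_def inverts_mat_def by auto
  have "dim_col B = n" "dim_row B = n"
    using arg_cong[OF B(1), of dim_col] arg_cong[OF B(2), of dim_col] A by auto
  with A B have "A \<in> Units (ring_mat TYPE(complex) n undefined)"
    by (auto simp: Units_def ring_mat_def)
  then obtain B' where "mat_inverse A = Some B'"
    using mat_inverse(1)[OF A] by fastforce
  then show "minv A \<in> carrier_mat n n" "A * minv A = 1\<^sub>m n" "minv A * A = 1\<^sub>m n"
    using mat_inverse(2)[OF A] unfolding minv_def by auto
qed

lemma herm_pos_def_carrier_mat: "herm_pos_def m V \<Longrightarrow> V \<in> carrier_mat m m"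
  unfolding herm_pos_def_def by simp

lemma herm_pos_def_cdot_eq_0_iff:
  assumes P: "herm_pos_def m P" and x: "x \<in> carrier_vec m"
  shows "cdot x (P *\<^sub>v x) = 0 \<longleftrightarrow> x = 0\<^sub>v m"
proof
  show "x = 0\<^sub>v m" if "cdot x (P *\<^sub>v x) = 0"
    using P x that unfolding herm_pos_def_def by fastforce
  show "cdot x (P *\<^sub>v x) = 0" if "x = 0\<^sub>v m"
    using that by (simp add: cdot_def)
qed

lemma herm_pos_def_invertible:
  assumes V: "herm_pos_def m V"
  shows "invertible_mat V"
proof -
  note Vc = herm_pos_def_carrier_mat[OF V]
  have "v = 0\<^sub>v m" if v: "v \<in> carrier_vec m" "V *\<^sub>v v = 0\<^sub>v m" for v
    using herm_pos_def_cdot_eq_0_iff[OF V v(1)] v cdot_zero_right[of v] by simp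
  then have "V \<in> Units (ring_mat TYPE(complex) m undefined)"
    by (intro det_non_zero_imp_unit[OF Vc]) (auto simp: det_0_iff_vec_prod_zero[OF Vc])
  then show ?thesis
    using Vc by (auto simp: Units_def ring_mat_def invertible_mat_def inverts_mat_def)
qed

lemma herm_pos_def_minv:
  assumes V: "herm_pos_def m V"
  shows "herm_pos_def m (minv V)"
proof -
  have Vc: "V \<in> carrier_mat m m" and adjV: "mat_adjoint V = V"
    and pos: "\<And>x. x \<in> carrier_vec m \<Longrightarrow> x \<noteq> 0\<^sub>v m \<Longrightarrow> Re (cdot x (V *\<^sub>v x)) > 0"
    using V unfolding herm_pos_def_def by auto
  note Vi = minv_mat[OF Vc herm_pos_def_invertible[OF V]]
  have "mat_adjoint (V * minv V) = mat_adjoint (minv V) * V"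
    using adjoint_mult[of V "minv V"] Vi(1) Vc adjV by simp
  then have left_inv: "mat_adjoint (minv V) * V = 1\<^sub>m m"
    using Vi(2) by (simp add: adjoint_one)
  have "mat_adjoint (minv V) = mat_adjoint (minv V) * (V * minv V)"
    using Vi by simp
  also have "\<dots> = mat_adjoint (minv V) * V * minv V"
    using adjoint_carrier_mat[OF Vi(1)] Vi(1) Vc by (simp add: assoc_mult_mat)
  also have "\<dots> = minv V"
    using Vi left_inv by simp
  finally have adjVi: "mat_adjoint (minv V) = minv V" .
  have "Re (cdot x (minv V *\<^sub>v x)) > 0" if x: "x \<in> carrier_vec m" "x \<noteq> 0\<^sub>v m" for x
  proof -
    define y where "y = minv V *\<^sub>v x"
    have y: "y \<in> carrier_vec m" "V *\<^sub>v y = x"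
      using Vi Vc x unfolding y_def by (auto simp: assoc_mult_mat_vec[of _ m m _ m, symmetric])
    then have "y \<noteq> 0\<^sub>v m"
      using Vc x by auto
    moreover have "cdot x (minv V *\<^sub>v x) = cdot y (V *\<^sub>v y)"
      using cdot_mult_mat_vec[OF Vc y(1) y(1)] adjV y unfolding y_def by simp
    ultimately show ?thesis
      using pos[of y] y(1) by simp
  qed
  then show ?thesis
    using Vi adjVi unfolding herm_pos_def_def by simp
qed

lemma herm_pos_def_cnj_cdot:
  assumes P: "herm_pos_def m P" and x: "x \<in> carrier_vec m" and y: "y \<in> carrier_vec m"
  shows "cnj (cdot x (P *\<^sub>v y)) = cdot y (P *\<^sub>v x)"
proof -
  have Pc: "P \<in> carrier_mat m m" and adjP: "mat_adjoint P = P"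
    using P unfolding herm_pos_def_def by auto
  have "cdot y (P *\<^sub>v x) = cdot (P *\<^sub>v y) x"
    using cdot_mult_mat_vec[OF Pc y x] adjP by simp
  then show ?thesis
    using cnj_cdot[of x "P *\<^sub>v y"] Pc x y by simp
qed

lemma herm_pos_def_cauchy_schwarz_eq_iff:
  assumes P: "herm_pos_def m P" and u: "u \<in> carrier_vec m" and H: "H \<in> carrier_vec m"
    and uu: "cdot u (P *\<^sub>v u) = complex_of_real \<beta>" and \<beta>: "\<beta> \<noteq> 0"
  shows "cdot H (P *\<^sub>v H) = cdot u (P *\<^sub>v H) * cnj (cdot u (P *\<^sub>v H)) / complex_of_real \<beta>
    \<longleftrightarrow> H = (cdot u (P *\<^sub>v H) / complex_of_real \<beta>) \<cdot>\<^sub>v u"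
proof -
  define p where "p = cdot u (P *\<^sub>v H)"
  define b where "b = p / complex_of_real \<beta>"
  note Pc = herm_pos_def_carrier_mat[OF P]
  have Hu: "cdot H (P *\<^sub>v u) = cnj p"
    unfolding p_def using herm_pos_def_cnj_cdot[OF P u H] by simp
  have "P *\<^sub>v (H - b \<cdot>\<^sub>v u) = P *\<^sub>v H - b \<cdot>\<^sub>v (P *\<^sub>v u)"
    using Pc H u by (simp add: mult_minus_distrib_mat_vec mult_mat_vec)
  then have "cdot (H - b \<cdot>\<^sub>v u) (P *\<^sub>v (H - b \<cdot>\<^sub>v u))
      = cdot H (P *\<^sub>v H) - b * cnj p - cnj b * p + cnj b * b * complex_of_real \<beta>"
    using Pc H u Hu uu
    by (simp add: cdot_minus_right cdot_minus_left cdot_smult_right cdot_smult_left p_def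
        algebra_simps)
  also have "\<dots> = cdot H (P *\<^sub>v H) - p * cnj p / complex_of_real \<beta>"
    using \<beta> by (simp add: b_def field_simps)
  finally have "cdot H (P *\<^sub>v H) = p * cnj p / complex_of_real \<beta>
      \<longleftrightarrow> H - b \<cdot>\<^sub>v u = 0\<^sub>v m"
    using herm_pos_def_cdot_eq_0_iff[OF P, of "H - b \<cdot>\<^sub>v u"] H u by auto
  also have "\<dots> \<longleftrightarrow> H = b \<cdot>\<^sub>v u"
    using H u by (auto simp: vec_eq_iff)
  finally show ?thesis
    unfolding p_def b_def .
qed

lemma minus_smult_outer_mult_mat_vec:
  assumes "P \<in> carrier_mat m m" "w \<in> carrier_vec m" "H \<in> carrier_vec m"
  shows "(P - c \<cdot>\<^sub>m outer w) *\<^sub>v H = P *\<^sub>v H - (c * cdot w H) \<cdot>\<^sub>v w"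
proof -
  have "outer w \<in> carrier_mat m m"
    using assms by (simp add: outer_def)
  then show ?thesis
    using assms by (simp add: minus_mult_distrib_mat_vec smult_outer_mult_mat_vec)
qed

definition Gamma_mat :: "complex mat \<Rightarrow> complex mat \<Rightarrow> complex mat" where
  "Gamma_mat V L = L * minv (mat_adjoint L * V * L) * mat_adjoint L"

definition Delta_mat :: "complex mat \<Rightarrow> complex mat \<Rightarrow> complex mat" where
  "Delta_mat V L = V - V * Gamma_mat V L * V"

context
  fixes V L :: "complex mat" and m l :: nat
  assumes V: "V \<in> carrier_mat m m" and L: "L \<in> carrier_mat m l"
    and M: "invertible_mat (mat_adjoint L * V * L)"
begin

lemma minv_gram_carrier: "minv (mat_adjoint L * V * L) \<in> carrier_mat l l"
  using minv_mat(1)[OF _ M] V L adjoint_carrier_mat[OF L] by simp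

lemma Gamma_mat_mult_vec:
  assumes "x \<in> carrier_vec m"
  shows "Gamma_mat V L *\<^sub>v x = L *\<^sub>v (minv (mat_adjoint L * V * L) *\<^sub>v (mat_adjoint L *\<^sub>v x))"
  using assms V L adjoint_carrier_mat[OF L] minv_gram_carrier
  by (simp add: Gamma_mat_def assoc_mult_mat_vec[of _ m l _ m] assoc_mult_mat_vec[of _ l l _ m])

lemma Gamma_mat_carrier: "Gamma_mat V L \<in> carrier_mat m m"
  using L adjoint_carrier_mat[OF L] minv_gram_carrier unfolding Gamma_mat_def by simp

lemma Delta_mat_mult_vec:
  assumes w: "w \<in> carrier_vec m"
  shows "Delta_mat V L *\<^sub>v w = V *\<^sub>v (w - Gamma_mat V L *\<^sub>v (V *\<^sub>v w))"
  using V w Gamma_mat_carrier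
  by (simp add: Delta_mat_def minus_mult_distrib_mat_vec mult_minus_distrib_mat_vec
      assoc_mult_mat_vec[of _ m m _ m])

lemma adjoint_mult_Delta_mat:
  assumes w: "w \<in> carrier_vec m"
  shows "mat_adjoint L *\<^sub>v (Delta_mat V L *\<^sub>v w) = 0\<^sub>v l"
proof -
  define M where "M = mat_adjoint L * V * L"
  define z where "z = minv M *\<^sub>v (mat_adjoint L *\<^sub>v (V *\<^sub>v w))"
  have Mc: "M \<in> carrier_mat l l" and Mi: "minv M \<in> carrier_mat l l" "M * minv M = 1\<^sub>m l"
    using minv_mat[OF _ M] V L adjoint_carrier_mat[OF L] unfolding M_def by auto
  have z: "z \<in> carrier_vec l"
    using Mi V L adjoint_carrier_mat[OF L] w unfolding z_def by simp
  \<comment> \<open>z solves the normal equations M z = L^H V w, and \<Gamma> V w = L z.\<close>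
  have "mat_adjoint L *\<^sub>v (V *\<^sub>v (L *\<^sub>v z)) = M *\<^sub>v z"
    using V L adjoint_carrier_mat[OF L] z unfolding M_def
    by (simp add: assoc_mult_mat_vec[of "mat_adjoint L * V" l m L l]
        assoc_mult_mat_vec[of "mat_adjoint L" l m V m] del: assoc_mult_mat)
  also have "\<dots> = mat_adjoint L *\<^sub>v (V *\<^sub>v w)"
    using Mc Mi V L adjoint_carrier_mat[OF L] w unfolding z_def
    by (simp add: assoc_mult_mat_vec[of _ l l _ l, symmetric])
  finally have "mat_adjoint L *\<^sub>v (V *\<^sub>v (L *\<^sub>v z)) = mat_adjoint L *\<^sub>v (V *\<^sub>v w)" .
  moreover have "Gamma_mat V L *\<^sub>v (V *\<^sub>v w) = L *\<^sub>v z"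
    using V w unfolding z_def M_def by (simp add: Gamma_mat_mult_vec)
  ultimately show ?thesis
    using V L adjoint_carrier_mat[OF L] w z
    by (simp add: Delta_mat_mult_vec mult_minus_distrib_mat_vec[of _ m m]
        mult_minus_distrib_mat_vec[of _ l m])
qed

lemma minv_mult_Delta_mat:
  assumes "invertible_mat V" and w: "w \<in> carrier_vec m"
  shows "minv V *\<^sub>v (Delta_mat V L *\<^sub>v w) = w - Gamma_mat V L *\<^sub>v (V *\<^sub>v w)"
proof -
  define y where "y = w - Gamma_mat V L *\<^sub>v (V *\<^sub>v w)"
  have y: "y \<in> carrier_vec m"
    using V w Gamma_mat_carrier unfolding y_def by simp
  have Vi: "minv V \<in> carrier_mat m m" "minv V * V = 1\<^sub>m m"
    using minv_mat[OF V assms(1)] by auto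
  have "minv V *\<^sub>v (Delta_mat V L *\<^sub>v w) = (minv V * V) *\<^sub>v y"
    unfolding Delta_mat_mult_vec[OF w] y_def[symmetric] using Vi(1) V y by simp
  also have "\<dots> = y"
    using Vi(2) y by simp
  finally show ?thesis
    unfolding y_def .
qed

lemma cdot_Gamma_mat_kernel_adjoint:
  assumes x: "x \<in> carrier_vec m" and H: "H \<in> carrier_vec m" and ker: "mat_adjoint L *\<^sub>v H = 0\<^sub>v l"
  shows "cdot (Gamma_mat V L *\<^sub>v x) H = 0"
proof -
  define y where "y = minv (mat_adjoint L * V * L) *\<^sub>v (mat_adjoint L *\<^sub>v x)"
  have y: "y \<in> carrier_vec l"
    using minv_gram_carrier adjoint_carrier_mat[OF L] x unfolding y_def by simp
  have "cdot (Gamma_mat V L *\<^sub>v x) H = cdot (mat_adjoint (mat_adjoint L) *\<^sub>v y) H"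
    using x unfolding y_def by (simp add: Gamma_mat_mult_vec adjoint_adjoint)
  also have "\<dots> = cdot y (mat_adjoint L *\<^sub>v H)"
    using cdot_mult_mat_vec[OF adjoint_carrier_mat[OF L] y H] ..
  finally show ?thesis
    using ker y cdot_zero_right[of y] by simp
qed

end

context
  fixes V L :: "complex mat" and m l :: nat
  assumes V: "herm_pos_def m V" and L: "L \<in> carrier_mat m l"
    and M: "invertible_mat (mat_adjoint L * V * L)"
begin

lemma Delta_mat_kernel_adjoint:
  assumes w: "w \<in> carrier_vec m"
  shows "Delta_mat V L *\<^sub>v w \<in> mat_kernel (mat_adjoint L)"
proof -
  note Vc = herm_pos_def_carrier_mat[OF V]
  have "Delta_mat V L *\<^sub>v w \<in> carrier_vec m"
    using Vc w Gamma_mat_carrier[OF Vc L M] by (simp add: Delta_mat_mult_vec[OF Vc L M w])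
  then show ?thesis
    using adjoint_mult_Delta_mat[OF Vc L M w] by (rule mat_kernelI[OF adjoint_carrier_mat[OF L]])
qed

lemma Delta_mat_carrier_vec: "w \<in> carrier_vec m \<Longrightarrow> Delta_mat V L *\<^sub>v w \<in> carrier_vec m"
  using mat_kernelD(1)[OF adjoint_carrier_mat[OF L] Delta_mat_kernel_adjoint] .

lemma cdot_Delta_mat_minv_kernel_adjoint:
  assumes w: "w \<in> carrier_vec m" and H: "H \<in> mat_kernel (mat_adjoint L)"
  shows "cdot (Delta_mat V L *\<^sub>v w) (minv V *\<^sub>v H) = cdot w H"
proof -
  note Vc = herm_pos_def_carrier_mat[OF V]
  note H = mat_kernelD[OF adjoint_carrier_mat[OF L] H]
  have Vi: "minv V \<in> carrier_mat m m" "mat_adjoint (minv V) = minv V"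
    using herm_pos_def_minv[OF V] unfolding herm_pos_def_def by auto
  have GVw: "Gamma_mat V L *\<^sub>v (V *\<^sub>v w) \<in> carrier_vec m"
    using Vc w Gamma_mat_carrier[OF Vc L M] by simp
  have "cdot (Delta_mat V L *\<^sub>v w) (minv V *\<^sub>v H) = cdot (minv V *\<^sub>v (Delta_mat V L *\<^sub>v w)) H"
    using cdot_mult_mat_vec[OF Vi(1) Delta_mat_carrier_vec[OF w] H(1)] Vi(2) by simp
  also have "\<dots> = cdot w H - cdot (Gamma_mat V L *\<^sub>v (V *\<^sub>v w)) H"
    using carrier_vecD[OF w] carrier_vecD[OF GVw]
    by (simp add: minv_mult_Delta_mat[OF Vc L M herm_pos_def_invertible[OF V] w] cdot_minus_left)
  also have "\<dots> = cdot w H"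
    using cdot_Gamma_mat_kernel_adjoint[OF Vc L M _ H] Vc w by simp
  finally show ?thesis .
qed

lemma rank_one_form_eq_0_iff_kernel:
  assumes w: "w \<in> carrier_vec m"
    and attain: "cdot w (Delta_mat V L *\<^sub>v w) = complex_of_real \<beta>" and \<beta>: "\<beta> \<noteq> 0"
    and H: "H \<in> mat_kernel (mat_adjoint L)"
  shows "cdot H ((minv V - (1 / complex_of_real \<beta>) \<cdot>\<^sub>m outer w) *\<^sub>v H) = 0
    \<longleftrightarrow> H = (cdot w H / complex_of_real \<beta>) \<cdot>\<^sub>v (Delta_mat V L *\<^sub>v w)"
proof -
  define u where "u = Delta_mat V L *\<^sub>v w"
  have Vi: "herm_pos_def m (minv V)" and Vic: "minv V \<in> carrier_mat m m"
    using herm_pos_def_minv[OF V] by (auto dest: herm_pos_def_carrier_mat)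
  have Hc: "H \<in> carrier_vec m"
    using mat_kernelD(1)[OF adjoint_carrier_mat[OF L] H] .
  have uH: "cdot u (minv V *\<^sub>v x) = cdot w x" if "x \<in> mat_kernel (mat_adjoint L)" for x
    using cdot_Delta_mat_minv_kernel_adjoint[OF w that] unfolding u_def .
  have "cdot H ((minv V - (1 / complex_of_real \<beta>) \<cdot>\<^sub>m outer w) *\<^sub>v H)
      = cdot H (minv V *\<^sub>v H) - cdot w H * cnj (cdot w H) / complex_of_real \<beta>"
    using Vic w Hc carrier_vecD[OF w] carrier_vecD[OF Hc] cnj_cdot[of w H]
    by (simp add: minus_smult_outer_mult_mat_vec cdot_minus_right cdot_smult_right)
  also have "\<dots> = 0 \<longleftrightarrow> H = (cdot w H / complex_of_real \<beta>) \<cdot>\<^sub>v u"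
    using herm_pos_def_cauchy_schwarz_eq_iff[OF Vi _ Hc _ \<beta>, of u] Delta_mat_carrier_vec[OF w]
      uH[OF H] uH[OF Delta_mat_kernel_adjoint[OF w]] attain
    unfolding u_def by simp
  finally show ?thesis
    unfolding u_def .
qed

lemma rank_one_form_zeros_kernel:
  assumes w: "w \<in> carrier_vec m"
    and attain: "cdot w (Delta_mat V L *\<^sub>v w) = complex_of_real \<beta>" and \<beta>: "\<beta> \<noteq> 0"
  shows "{H \<in> mat_kernel (mat_adjoint L).
      cdot H ((minv V - (1 / complex_of_real \<beta>) \<cdot>\<^sub>m outer w) *\<^sub>v H) = 0}
    = {b \<cdot>\<^sub>v (Delta_mat V L *\<^sub>v w) | b. True}"
proof (intro equalityI subsetI)
  fix H assume "H \<in> {H \<in> mat_kernel (mat_adjoint L).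
    cdot H ((minv V - (1 / complex_of_real \<beta>) \<cdot>\<^sub>m outer w) *\<^sub>v H) = 0}"
  then show "H \<in> {b \<cdot>\<^sub>v (Delta_mat V L *\<^sub>v w) | b. True}"
    using rank_one_form_eq_0_iff_kernel[OF w attain \<beta>] by auto
next
  fix H assume "H \<in> {b \<cdot>\<^sub>v (Delta_mat V L *\<^sub>v w) | b. True}"
  then obtain b where H: "H = b \<cdot>\<^sub>v (Delta_mat V L *\<^sub>v w)"
    by auto
  have "H \<in> mat_kernel (mat_adjoint L)"
    unfolding H
    by (rule mat_kernel_smult[OF adjoint_carrier_mat[OF L] Delta_mat_kernel_adjoint[OF w]])
  moreover have "cdot w H = b * complex_of_real \<beta>"
    using attain carrier_vecD[OF w] carrier_vecD[OF Delta_mat_carrier_vec[OF w]]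
    unfolding H by (simp add: cdot_smult_right)
  ultimately show "H \<in> {H \<in> mat_kernel (mat_adjoint L).
      cdot H ((minv V - (1 / complex_of_real \<beta>) \<cdot>\<^sub>m outer w) *\<^sub>v H) = 0}"
    using rank_one_form_eq_0_iff_kernel[OF w attain \<beta>, of H] \<beta> unfolding H by simp
qed

lemma rank_one_form_mult_Delta_mat:
  assumes w: "w \<in> carrier_vec m"
    and attain: "cdot w (Delta_mat V L *\<^sub>v w) = complex_of_real \<beta>" and \<beta>: "\<beta> \<noteq> 0"
  shows "(minv V - (1 / complex_of_real \<beta>) \<cdot>\<^sub>m outer w) *\<^sub>v (b \<cdot>\<^sub>v (Delta_mat V L *\<^sub>v w))
    = (- b) \<cdot>\<^sub>v (Gamma_mat V L *\<^sub>v (V *\<^sub>v w))"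
proof -
  define u where "u = Delta_mat V L *\<^sub>v w"
  define x where "x = Gamma_mat V L *\<^sub>v (V *\<^sub>v w)"
  note Vc = herm_pos_def_carrier_mat[OF V]
  have Vic: "minv V \<in> carrier_mat m m"
    using herm_pos_def_carrier_mat[OF herm_pos_def_minv[OF V]] .
  have u: "u \<in> carrier_vec m"
    using Delta_mat_carrier_vec[OF w] unfolding u_def .
  have x: "x \<in> carrier_vec m"
    using Vc w Gamma_mat_carrier[OF Vc L M] unfolding x_def by simp
  have "(minv V - (1 / complex_of_real \<beta>) \<cdot>\<^sub>m outer w) *\<^sub>v (b \<cdot>\<^sub>v u)
      = b \<cdot>\<^sub>v (minv V *\<^sub>v u) - b \<cdot>\<^sub>v w"
    using Vic w u attain \<beta> carrier_vecD[OF u] carrier_vecD[OF w]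
    by (simp add: minus_smult_outer_mult_mat_vec mult_mat_vec cdot_smult_right u_def)
  also have "\<dots> = b \<cdot>\<^sub>v (w - x) - b \<cdot>\<^sub>v w"
    unfolding u_def x_def minv_mult_Delta_mat[OF Vc L M herm_pos_def_invertible[OF V] w] ..
  also have "\<dots> = (- b) \<cdot>\<^sub>v x"
    using w x by (intro eq_vecI) (auto simp: algebra_simps)
  finally show ?thesis
    unfolding u_def x_def .
qed

end

theorem mainTheorem5:
  fixes A0 :: "nat \<Rightarrow> nat \<Rightarrow> complex"
    and Ah :: "nat \<Rightarrow> nat \<Rightarrow> nat \<Rightarrow> nat list \<Rightarrow> complex"
    and d t m l :: nat
    and V :: "complex mat" and w :: "complex vec" and k :: "real vec"
    and L Gam Del :: "real vec \<Rightarrow> complex mat" and \<beta> :: real and T :: "complex mat"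
    and g :: "complex vec \<Rightarrow> complex"
  assumes dims: "d \<ge> 1" "t \<ge> 1" "m \<ge> 1" "l \<ge> 1"
    and L_def: "L \<equiv> Lhat A0 Ah d t m l"
    and V: "herm_pos_def m V"
    and nonsing: "\<And>k. k \<in> carrier_vec d \<Longrightarrow> k \<noteq> 0\<^sub>v d \<Longrightarrow>
        invertible_mat (mat_adjoint (L k) * V * L k)"
    and Gam_def: "Gam \<equiv> (\<lambda>k. L k * minv (mat_adjoint (L k) * V * L k) * mat_adjoint (L k))"
    and Del_def: "Del \<equiv> (\<lambda>k. V - V * Gam k * V)"
    and w: "w \<in> carrier_vec m"
    and beta_def: "\<beta> \<equiv> Sup ((\<lambda>k. Re (cdot w (Del k *\<^sub>v w))) ` {k \<in> carrier_vec d. k \<noteq> 0\<^sub>v d})"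
    and bdd: "bdd_above ((\<lambda>k. Re (cdot w (Del k *\<^sub>v w))) ` {k \<in> carrier_vec d. k \<noteq> 0\<^sub>v d})"
    and beta_pos: "\<beta> > 0"
    and T_def: "T \<equiv> minv V - (1 / complex_of_real \<beta>) \<cdot>\<^sub>m outer w"
    and g_def: "g \<equiv> (\<lambda>J. cdot J (T *\<^sub>v J))"
    and k: "k \<in> carrier_vec d" "k \<noteq> 0\<^sub>v d"
    and attain: "cdot w (Del k *\<^sub>v w) = complex_of_real \<beta>"
  shows "{H \<in> mat_kernel (mat_adjoint (L k)). g H = 0} = {b \<cdot>\<^sub>v (Del k *\<^sub>v w) | b. True}
    \<and> (\<forall>b. T *\<^sub>v (b \<cdot>\<^sub>v (Del k *\<^sub>v w)) = (- b) \<cdot>\<^sub>v (Gam k *\<^sub>v (V *\<^sub>v w))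
         \<and> T *\<^sub>v (b \<cdot>\<^sub>v (Del k *\<^sub>v w)) = L k *\<^sub>v ((- b) \<cdot>\<^sub>v
              (minv (mat_adjoint (L k) * V * L k) *\<^sub>v (mat_adjoint (L k) *\<^sub>v (V *\<^sub>v w)))))"
proof -
  have Lk: "L k \<in> carrier_mat m l"
    by (simp add: L_def Lhat_def)
  note Vc = herm_pos_def_carrier_mat[OF V] and Mk = nonsing[OF k]
  have Gam: "Gam k = Gamma_mat V (L k)" and Del: "Del k = Delta_mat V (L k)"
    unfolding Gam_def Del_def Gamma_mat_def Delta_mat_def by simp_all
  have \<beta>: "\<beta> \<noteq> 0"
    using beta_pos by simp
  define z where "z = minv (mat_adjoint (L k) * V * L k) *\<^sub>v (mat_adjoint (L k) *\<^sub>v (V *\<^sub>v w))"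
  have z: "z \<in> carrier_vec l"
    using minv_gram_carrier[OF Vc Lk Mk] adjoint_carrier_mat[OF Lk] Vc w unfolding z_def by simp
  have "{H \<in> mat_kernel (mat_adjoint (L k)). g H = 0} = {b \<cdot>\<^sub>v (Del k *\<^sub>v w) | b. True}"
    using rank_one_form_zeros_kernel[OF V Lk Mk w attain[unfolded Del] \<beta>]
    unfolding g_def T_def Del .
  moreover have "T *\<^sub>v (b \<cdot>\<^sub>v (Del k *\<^sub>v w)) = (- b) \<cdot>\<^sub>v (Gam k *\<^sub>v (V *\<^sub>v w))" for b
    unfolding T_def Gam Del
    by (rule rank_one_form_mult_Delta_mat[OF V Lk Mk w attain[unfolded Del] \<beta>])
  moreover have "Gam k *\<^sub>v (V *\<^sub>v w) = L k *\<^sub>v z"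
    using Vc w unfolding Gam z_def by (simp add: Gamma_mat_mult_vec[OF Vc Lk Mk])
  ultimately show ?thesis
    using mult_mat_vec[OF Lk z] unfolding z_def by simp
qed

end
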